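(* Let $G=(V,E)$ be a finite, simple, connected graph which is effective Bonnet Myers sharp with curvature $K$, i.e. $K=\min_{u\sim v}\kappa(u,v)>0$ and $\operatorname{diam}_{\operatorname{eff}}(G)=\frac{\max_v\operatorname{Deg}(v)}{K}$. Let $x\sim y$. Then every $x'\in V_x^y$ has exactly one neighbor in $V_y^x$, and exactly $K-2$ neighbors of $x'$ lie in $V^{xy}$.
   Context: $d$ is the combinatorial distance, $\operatorname{Deg}$ the degree, $\operatorname{diam}_{\operatorname{eff}}(G)=\frac{1}{|V|^2}\sum_{x,y}d(x,y)$. Laplacian $\Delta f(x)=\sum_{y\sim x}(f(y)-f(x))$. Ollivier curvature of an edge: $\kappa(x,y)=\inf\{\Delta f(x)-\Delta f(y): f(y)-f(x)=1,\ \max_{u\sim v}|f(u)-f(v)|=1\}$. For adjacent $x\sim y$: $V_x^y=\{v: d(v,x)<d(v,y)\}$, $V_y^x=\{v:d(v,y)<d(v,x)\}$, $V^{xy}=\{v:d(v,x)=d(v,y)\}$. *)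

theory Defs
  imports Complex_Main
begin

definition simple_graph :: "'a set \<Rightarrow> ('a \<Rightarrow> 'a \<Rightarrow> bool) \<Rightarrow> bool" where
  "simple_graph V E \<longleftrightarrow> finite V \<and> V \<noteq> {} \<and>
     (\<forall>u v. E u v \<longrightarrow> u \<in> V \<and> v \<in> V) \<and>
     (\<forall>u v. E u v \<longrightarrow> E v u) \<and> (\<forall>u. \<not> E u u)"

definition walk :: "'a set \<Rightarrow> ('a \<Rightarrow> 'a \<Rightarrow> bool) \<Rightarrow> 'a \<Rightarrow> 'a \<Rightarrow> nat \<Rightarrow> bool" where
  "walk V E x y n \<longleftrightarrow> (\<exists>p :: nat \<Rightarrow> 'a. p 0 = x \<and> p n = y \<and> (\<forall>i\<le>n. p i \<in> V) \<and>
     (\<forall>i<n. E (p i) (p (Suc i))))"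

definition connected_graph :: "'a set \<Rightarrow> ('a \<Rightarrow> 'a \<Rightarrow> bool) \<Rightarrow> bool" where
  "connected_graph V E \<longleftrightarrow> (\<forall>x\<in>V. \<forall>y\<in>V. \<exists>n. walk V E x y n)"

definition gdist :: "'a set \<Rightarrow> ('a \<Rightarrow> 'a \<Rightarrow> bool) \<Rightarrow> 'a \<Rightarrow> 'a \<Rightarrow> nat" where
  "gdist V E x y = (LEAST n. walk V E x y n)"

definition Deg :: "'a set \<Rightarrow> ('a \<Rightarrow> 'a \<Rightarrow> bool) \<Rightarrow> 'a \<Rightarrow> nat" where
  "Deg V E v = card {u \<in> V. E v u}"

definition diam_eff :: "'a set \<Rightarrow> ('a \<Rightarrow> 'a \<Rightarrow> bool) \<Rightarrow> real" where
  "diam_eff V E = (\<Sum>x\<in>V. \<Sum>y\<in>V. real (gdist V E x y)) / (real (card V))^2"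

definition laplacian :: "'a set \<Rightarrow> ('a \<Rightarrow> 'a \<Rightarrow> bool) \<Rightarrow> ('a \<Rightarrow> real) \<Rightarrow> 'a \<Rightarrow> real" where
  "laplacian V E f x = (\<Sum>y\<in>{y \<in> V. E x y}. f y - f x)"

text \<open>Ollivier curvature of an edge (Muench--Wojciechowski limit-free formulation).\<close>
definition ollivier :: "'a set \<Rightarrow> ('a \<Rightarrow> 'a \<Rightarrow> bool) \<Rightarrow> 'a \<Rightarrow> 'a \<Rightarrow> real" where
  "ollivier V E x y = Inf {laplacian V E f x - laplacian V E f y | f.
      f y - f x = 1 \<and> Max {\<bar>f u - f v\<bar> | u v. u \<in> V \<and> v \<in> V \<and> E u v} = 1}"

definition min_curv :: "'a set \<Rightarrow> ('a \<Rightarrow> 'a \<Rightarrow> bool) \<Rightarrow> real" where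
  "min_curv V E = Min {ollivier V E u v | u v. E u v}"

end

theory Submission
  imports Defs
begin

text \<open>
  Applying the curvature bound along a geodesic to the 1-Lipschitz function d(., u) gives
  Lap d(., u) (p) <= Deg u - K d(p, u).  Summing over p (the Laplacian sums to zero) and over u
  yields K sum d <= |V| sum Deg <= |V|^2 max Deg, which is the effective Bonnet-Myers bound;
  sharpness turns all these inequalities into equalities, so the graph is regular and
  Lap d(., u) (p) = Deg - K d(p, u) exactly.

  For an edge x ~ y and p in V_x^y let a(p) count the neighbours of p in V_y^x.  The
  1-Lipschitz functions min(d_x, d_y) and max(d_x, d_y) have Laplacians Lap d_x (p) - a(p) and
  Lap d_y (p) + a(p) at p, so the curvature bound on an edge q -> p of a geodesic from x inside
  V_x^y yields both a(q) <= a(p) and a(p) <= a(q).  As a(x) = 1, a is identically 1 on V_x^y.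
  Finally Lap (d_y - d_x) (p) = -K by the exact formula, while counting neighbours gives
  -(2 a(p) + b(p)) with b(p) the number of neighbours in V^xy; hence b(p) = K - 2.
\<close>

definition one_lipschitz :: "('a \<Rightarrow> 'a \<Rightarrow> bool) \<Rightarrow> ('a \<Rightarrow> real) \<Rightarrow> bool" where
  "one_lipschitz E f \<longleftrightarrow> (\<forall>u v. E u v \<longrightarrow> \<bar>f u - f v\<bar> \<le> 1)"

lemma one_lipschitz_min:
  assumes "one_lipschitz E f" "one_lipschitz E g"
  shows "one_lipschitz E (\<lambda>z. min (f z) (g z))"
  unfolding one_lipschitz_def
proof (intro allI impI)
  fix u v assume "E u v"
  with assms have "\<bar>f u - f v\<bar> \<le> 1" "\<bar>g u - g v\<bar> \<le> 1"
    unfolding one_lipschitz_def by auto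
  then show "\<bar>min (f u) (g u) - min (f v) (g v)\<bar> \<le> 1"
    by (auto simp: min_def abs_le_iff)
qed

lemma one_lipschitz_max:
  assumes "one_lipschitz E f" "one_lipschitz E g"
  shows "one_lipschitz E (\<lambda>z. max (f z) (g z))"
  unfolding one_lipschitz_def
proof (intro allI impI)
  fix u v assume "E u v"
  with assms have "\<bar>f u - f v\<bar> \<le> 1" "\<bar>g u - g v\<bar> \<le> 1"
    unfolding one_lipschitz_def by auto
  then show "\<bar>max (f u) (g u) - max (f v) (g v)\<bar> \<le> 1"
    by (auto simp: max_def abs_le_iff)
qed

lemma laplacian_diff:
  "laplacian V E (\<lambda>z. f z - g z) p = laplacian V E f p - laplacian V E g p"
  unfolding laplacian_def by (simp add: sum_subtractf[symmetric] algebra_simps)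

lemma walk_0_iff: "walk V E x y 0 \<longleftrightarrow> x = y \<and> x \<in> V"
  unfolding walk_def by (auto intro!: exI[of _ "\<lambda>_. x"])

locale connected_simple_graph =
  fixes V :: "'a set" and E :: "'a \<Rightarrow> 'a \<Rightarrow> bool"
  assumes simple: "simple_graph V E" and connected: "connected_graph V E"
begin

lemma finite_V: "finite V"
  using simple by (simp add: simple_graph_def)

lemma card_V_pos: "card V > 0"
  using simple by (simp add: simple_graph_def card_gt_0_iff)

lemma edge_in_V: "E u v \<Longrightarrow> u \<in> V \<and> v \<in> V"
  using simple by (simp add: simple_graph_def)

lemma edge_sym: "E u v \<Longrightarrow> E v u"
  using simple by (simp add: simple_graph_def)

lemma edge_irrefl: "\<not> E u u"
  using simple by (simp add: simple_graph_def)

definition neighbours :: "'a \<Rightarrow> 'a set" where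
  "neighbours p = {w \<in> V. E p w}"

lemma finite_neighbours: "finite (neighbours p)"
  unfolding neighbours_def using finite_V by simp

lemma Deg_eq_card_neighbours: "Deg V E p = card (neighbours p)"
  unfolding Deg_def neighbours_def ..

lemma laplacian_eq_sum_neighbours: "laplacian V E f p = (\<Sum>w\<in>neighbours p. f w - f p)"
  unfolding laplacian_def neighbours_def ..

subsection \<open>Walks and the combinatorial distance\<close>

lemma walk_Suc_iff: "walk V E x y (Suc n) \<longleftrightarrow> (\<exists>w. E x w \<and> walk V E w y n)"
proof
  assume "walk V E x y (Suc n)"
  then obtain p where p: "p 0 = x" "p (Suc n) = y" "\<forall>i\<le>Suc n. p i \<in> V"
    "\<forall>i<Suc n. E (p i) (p (Suc i))" unfolding walk_def by blast
  have "walk V E (p 1) y n"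
    unfolding walk_def by (rule exI[of _ "\<lambda>i. p (Suc i)"]) (use p in auto)
  moreover have "E x (p 1)" using p by auto
  ultimately show "\<exists>w. E x w \<and> walk V E w y n" by blast
next
  assume "\<exists>w. E x w \<and> walk V E w y n"
  then obtain w q where w: "E x w" and q: "q 0 = w" "q n = y" "\<forall>i\<le>n. q i \<in> V"
    "\<forall>i<n. E (q i) (q (Suc i))" unfolding walk_def by blast
  let ?p = "\<lambda>i. if i = 0 then x else q (i - 1)"
  have "?p i \<in> V" if "i \<le> Suc n" for i
    using that q edge_in_V[OF w] by (cases i) auto
  moreover have "E (?p i) (?p (Suc i))" if "i < Suc n" for i
    using that q w by (cases i) auto
  ultimately show "walk V E x y (Suc n)"
    using q unfolding walk_def by (intro exI[of _ ?p]) auto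
qed

lemma walk_append: "walk V E x y n \<Longrightarrow> walk V E y z k \<Longrightarrow> walk V E x z (n + k)"
  by (induction n arbitrary: x) (auto simp: walk_0_iff walk_Suc_iff)

lemma gdist_walk: "x \<in> V \<Longrightarrow> y \<in> V \<Longrightarrow> walk V E x y (gdist V E x y)"
  unfolding gdist_def using connected unfolding connected_graph_def by (blast intro: LeastI_ex)

lemma gdist_le_walk: "walk V E x y n \<Longrightarrow> gdist V E x y \<le> n"
  unfolding gdist_def by (rule Least_le)

lemma gdist_eq_0_iff: "x \<in> V \<Longrightarrow> y \<in> V \<Longrightarrow> gdist V E x y = 0 \<longleftrightarrow> x = y"
  by (metis gdist_le_walk gdist_walk le_zero_eq walk_0_iff)

lemma gdist_triangle:
  "x \<in> V \<Longrightarrow> y \<in> V \<Longrightarrow> z \<in> V \<Longrightarrow> gdist V E x z \<le> gdist V E x y + gdist V E y z"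
  by (meson gdist_le_walk gdist_walk walk_append)

lemma gdist_edge: "E a b \<Longrightarrow> gdist V E a b = 1"
proof -
  assume e: "E a b"
  then have "walk V E a b 1" using edge_in_V by (simp add: walk_Suc_iff walk_0_iff)
  then have "gdist V E a b \<le> 1" by (rule gdist_le_walk)
  moreover have "gdist V E a b \<noteq> 0" using e edge_in_V edge_irrefl gdist_eq_0_iff by metis
  ultimately show ?thesis by simp
qed

lemma gdist_le_edge: "E a b \<Longrightarrow> p \<in> V \<Longrightarrow> gdist V E a p \<le> gdist V E b p + 1"
  using gdist_triangle[of a b p] gdist_edge[of a b] edge_in_V[of a b] by simp

lemma gdist_Suc_neighbour:
  assumes "u \<in> V" "p \<in> V" "gdist V E u p = Suc k"
  obtains w where "E u w" "gdist V E w p = k"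
proof -
  obtain w where w: "E u w" "walk V E w p k"
    using gdist_walk[of u p] assms by (auto simp: walk_Suc_iff)
  have "gdist V E w p = k"
    using gdist_le_walk[OF w(2)] gdist_le_edge[OF w(1) \<open>p \<in> V\<close>] assms(3) by simp
  with w(1) show thesis by (rule that)
qed

definition gdist_to :: "'a \<Rightarrow> 'a \<Rightarrow> real" where
  "gdist_to u z = real (gdist V E z u)"

lemma one_lipschitz_gdist_to: "u \<in> V \<Longrightarrow> one_lipschitz E (gdist_to u)"
  unfolding one_lipschitz_def gdist_to_def
  using gdist_le_edge edge_sym by (smt (verit) of_nat_1 of_nat_add of_nat_mono)

subsection \<open>Laplacian and curvature\<close>

lemma sum_laplacian_eq_0: "(\<Sum>x\<in>V. laplacian V E f x) = 0"
proof -
  let ?h = "\<lambda>x y. if E x y then f y - f x else 0"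
  have "laplacian V E f x = (\<Sum>y\<in>V. ?h x y)" for x
    unfolding laplacian_def using finite_V by (simp add: sum.inter_filter[symmetric])
  moreover have "(\<Sum>x\<in>V. \<Sum>y\<in>V. ?h x y) = (\<Sum>y\<in>V. \<Sum>x\<in>V. - ?h y x)"
    by (subst sum.swap) (auto intro!: sum.cong dest: edge_sym)
  ultimately show ?thesis by (simp add: sum_negf)
qed

lemma sum_const_minus_laplacian: "(\<Sum>p\<in>V. c - laplacian V E f p) = card V * c"
  by (simp add: sum_subtractf sum_laplacian_eq_0)

lemma abs_laplacian_le_Deg:
  assumes "one_lipschitz E f"
  shows "\<bar>laplacian V E f u\<bar> \<le> Deg V E u"
proof -
  have "\<bar>laplacian V E f u\<bar> \<le> (\<Sum>w\<in>neighbours u. \<bar>f w - f u\<bar>)"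
    unfolding laplacian_eq_sum_neighbours by (rule sum_abs)
  also have "\<dots> \<le> of_nat (card (neighbours u)) * 1"
    using assms unfolding one_lipschitz_def neighbours_def
    by (intro sum_bounded_above) (auto dest: edge_sym)
  finally show ?thesis by (simp add: Deg_eq_card_neighbours)
qed

lemma Max_edge_variation_eq_1_iff:
  assumes "E u v"
  shows "Max {\<bar>f a - f b\<bar> | a b. a \<in> V \<and> b \<in> V \<and> E a b} = 1 \<longleftrightarrow>
    one_lipschitz E f \<and> (\<exists>a b. E a b \<and> \<bar>f a - f b\<bar> = 1)"
proof -
  let ?A = "{\<bar>f a - f b\<bar> | a b. a \<in> V \<and> b \<in> V \<and> E a b}"
  have "?A \<subseteq> (\<lambda>(a, b). \<bar>f a - f b\<bar>) ` (V \<times> V)" by auto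
  then have "finite ?A" using finite_V by (meson finite_SigmaI finite_imageI finite_subset)
  moreover have "?A \<noteq> {}" using assms edge_in_V by blast
  ultimately have Max_iff: "Max ?A = 1 \<longleftrightarrow> 1 \<in> ?A \<and> (\<forall>z\<in>?A. z \<le> 1)"
    by (rule Max_eq_iff)
  show ?thesis
    unfolding Max_iff one_lipschitz_def using edge_in_V by (auto; metis)
qed

lemma ollivier_le_laplacian_diff:
  assumes "E u v" "one_lipschitz E f" "f v - f u = 1"
  shows "ollivier V E u v \<le> laplacian V E f u - laplacian V E f v"
proof -
  let ?S = "{laplacian V E g u - laplacian V E g v | g. g v - g u = 1 \<and>
      Max {\<bar>g a - g b\<bar> | a b. a \<in> V \<and> b \<in> V \<and> E a b} = 1}"
  have "\<bar>f u - f v\<bar> = 1" using assms(3) by simp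
  then have "laplacian V E f u - laplacian V E f v \<in> ?S"
    using assms Max_edge_variation_eq_1_iff[OF assms(1)] by blast
  moreover have "bdd_below ?S"
  proof (rule bdd_belowI)
    fix z assume "z \<in> ?S"
    then obtain g where "z = laplacian V E g u - laplacian V E g v" "one_lipschitz E g"
      using Max_edge_variation_eq_1_iff[OF assms(1)] by blast
    then show "- real (Deg V E u + Deg V E v) \<le> z"
      using abs_laplacian_le_Deg[of g u] abs_laplacian_le_Deg[of g v] by auto
  qed
  ultimately show ?thesis unfolding ollivier_def by (rule cInf_lower)
qed

lemma min_curv_le_ollivier: "E u v \<Longrightarrow> min_curv V E \<le> ollivier V E u v"
proof -
  assume "E u v"
  have "{ollivier V E a b | a b. E a b} \<subseteq> (\<lambda>(a, b). ollivier V E a b) ` (V \<times> V)"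
    using edge_in_V by auto
  then have "finite {ollivier V E a b | a b. E a b}"
    using finite_V by (meson finite_SigmaI finite_imageI finite_subset)
  then show ?thesis unfolding min_curv_def using \<open>E u v\<close> by (intro Min_le) auto
qed

lemma min_curv_le_laplacian_diff:
  "E u v \<Longrightarrow> one_lipschitz E f \<Longrightarrow> f v - f u = 1 \<Longrightarrow>
    min_curv V E \<le> laplacian V E f u - laplacian V E f v"
  using min_curv_le_ollivier ollivier_le_laplacian_diff order.trans by blast

lemma laplacian_gdist_to_self: "u \<in> V \<Longrightarrow> laplacian V E (gdist_to u) u = Deg V E u"
proof -
  assume "u \<in> V"
  have "gdist_to u w - gdist_to u u = 1" if "w \<in> neighbours u" for w
    using that \<open>u \<in> V\<close> gdist_edge edge_sym gdist_eq_0_iff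
    unfolding neighbours_def gdist_to_def by auto
  then show ?thesis
    unfolding laplacian_eq_sum_neighbours Deg_eq_card_neighbours by simp
qed

lemma min_curv_mult_gdist_to_le:
  "u \<in> V \<Longrightarrow> p \<in> V \<Longrightarrow>
    min_curv V E * gdist_to u p \<le> Deg V E u - laplacian V E (gdist_to u) p"
proof (induction "gdist V E p u" arbitrary: p)
  case 0
  then have "p = u" using gdist_eq_0_iff by simp
  with 0 show ?case using laplacian_gdist_to_self by (simp add: gdist_to_def[of u u])
next
  case (Suc k)
  obtain w where w: "E p w" "gdist V E w u = k"
    using gdist_Suc_neighbour Suc by metis
  have "min_curv V E * gdist_to u w \<le> Deg V E u - laplacian V E (gdist_to u) w"
    using Suc w edge_in_V by blast
  moreover have "min_curv V E \<le> laplacian V E (gdist_to u) w - laplacian V E (gdist_to u) p"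
    using min_curv_le_laplacian_diff[OF edge_sym[OF w(1)] one_lipschitz_gdist_to[OF Suc.prems(1)]]
      Suc.hyps(2) w(2) by (simp add: gdist_to_def)
  moreover have "gdist_to u p = gdist_to u w + 1"
    using Suc.hyps(2) w(2) by (simp add: gdist_to_def)
  ultimately show ?case by (simp add: algebra_simps)
qed

lemma min_curv_mult_sum_gdist_to_le:
  "u \<in> V \<Longrightarrow> min_curv V E * (\<Sum>p\<in>V. gdist_to u p) \<le> card V * Deg V E u"
proof -
  assume "u \<in> V"
  have "min_curv V E * (\<Sum>p\<in>V. gdist_to u p)
      \<le> (\<Sum>p\<in>V. Deg V E u - laplacian V E (gdist_to u) p)"
    unfolding sum_distrib_left using min_curv_mult_gdist_to_le \<open>u \<in> V\<close>
    by (intro sum_mono) auto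
  then show ?thesis by (simp add: sum_const_minus_laplacian)
qed

subsection \<open>The two sides of an edge\<close>

text \<open>\<open>closer_to x y\<close> and \<open>equidistant x y\<close> are the sets V_x^y and V^xy of the paper.\<close>

definition closer_to :: "'a \<Rightarrow> 'a \<Rightarrow> 'a set" where
  "closer_to x y = {v \<in> V. gdist V E v x < gdist V E v y}"

definition equidistant :: "'a \<Rightarrow> 'a \<Rightarrow> 'a set" where
  "equidistant x y = {v \<in> V. gdist V E v x = gdist V E v y}"

lemma gdist_le_Suc_adjacent: "E x y \<Longrightarrow> w \<in> V \<Longrightarrow> gdist V E w x \<le> gdist V E w y + 1"
  using gdist_triangle[of w y x] gdist_edge[OF edge_sym] edge_in_V by force

lemma closer_to_gdist_Suc:
  "E x y \<Longrightarrow> p \<in> closer_to x y \<Longrightarrow> gdist V E p y = Suc (gdist V E p x)"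
  using gdist_le_Suc_adjacent[of y x p] edge_sym unfolding closer_to_def by fastforce

lemma neighbours_inter_closer_to_self: "E x y \<Longrightarrow> neighbours x \<inter> closer_to y x = {y}"
  using gdist_edge edge_sym edge_in_V gdist_eq_0_iff
  unfolding neighbours_def closer_to_def by fastforce

lemma gdist_adjacent_cases:
  assumes "E x y" "w \<in> V"
  shows "gdist V E w y = gdist V E w x \<or> gdist V E w y = Suc (gdist V E w x)
    \<or> gdist V E w x = Suc (gdist V E w y)"
  using gdist_le_Suc_adjacent[OF assms] gdist_le_Suc_adjacent[OF edge_sym[OF assms(1)] assms(2)]
  by linarith

lemma laplacian_min_gdist_to:
  assumes "E x y" "p \<in> closer_to x y"
  shows "laplacian V E (\<lambda>z. min (gdist_to x z) (gdist_to y z)) p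
    = laplacian V E (gdist_to x) p - card (neighbours p \<inter> closer_to y x)"
proof -
  have "min (gdist_to x w) (gdist_to y w) - min (gdist_to x p) (gdist_to y p)
      = (gdist_to x w - gdist_to x p) - of_bool (w \<in> closer_to y x)"
    if "w \<in> neighbours p" for w
    using that gdist_adjacent_cases[OF assms(1), of w] closer_to_gdist_Suc[OF assms]
    unfolding neighbours_def closer_to_def gdist_to_def by auto
  then show ?thesis
    by (simp add: laplacian_eq_sum_neighbours sum_subtractf finite_neighbours)
qed

lemma laplacian_max_gdist_to:
  assumes "E x y" "p \<in> closer_to x y"
  shows "laplacian V E (\<lambda>z. max (gdist_to x z) (gdist_to y z)) p
    = laplacian V E (gdist_to y) p + card (neighbours p \<inter> closer_to y x)"
proof -
  have "max (gdist_to x w) (gdist_to y w) - max (gdist_to x p) (gdist_to y p)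
      = (gdist_to y w - gdist_to y p) + of_bool (w \<in> closer_to y x)"
    if "w \<in> neighbours p" for w
    using that gdist_adjacent_cases[OF assms(1), of w] closer_to_gdist_Suc[OF assms]
    unfolding neighbours_def closer_to_def gdist_to_def by auto
  then show ?thesis
    by (simp add: laplacian_eq_sum_neighbours sum.distrib finite_neighbours)
qed

lemma laplacian_gdist_to_diff:
  assumes "E x y" "p \<in> closer_to x y"
  shows "laplacian V E (\<lambda>z. gdist_to y z - gdist_to x z) p
    = - (2 * card (neighbours p \<inter> closer_to y x) + card (neighbours p \<inter> equidistant x y))"
proof -
  have "(gdist_to y w - gdist_to x w) - (gdist_to y p - gdist_to x p)
      = - (2 * of_bool (w \<in> closer_to y x) + of_bool (w \<in> equidistant x y))"
    if "w \<in> neighbours p" for w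
    using that gdist_adjacent_cases[OF assms(1), of w] closer_to_gdist_Suc[OF assms]
    unfolding neighbours_def closer_to_def equidistant_def gdist_to_def by auto
  then show ?thesis
    by (simp add: laplacian_eq_sum_neighbours sum_negf sum_subtractf sum_distrib_left[symmetric]
        finite_neighbours)
qed

end

subsection \<open>Graphs attaining the effective Bonnet-Myers bound\<close>

locale bonnet_myers_sharp = connected_simple_graph +
  fixes K :: real
  assumes K_eq_min_curv: "K = min_curv V E" and K_pos: "K > 0"
    and diam_eff_eq: "diam_eff V E = real (Max (Deg V E ` V)) / K"
begin

lemma sum_K_mult_sum_gdist_to:
  "(\<Sum>u\<in>V. K * (\<Sum>p\<in>V. gdist_to u p)) = (\<Sum>u\<in>V. real (card V) * Max (Deg V E ` V))"
proof -
  have "(\<Sum>x\<in>V. \<Sum>y\<in>V. real (gdist V E x y)) / real (card V) ^ 2 = Max (Deg V E ` V) / K"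
    using diam_eff_eq unfolding diam_eff_def .
  then have "K * (\<Sum>x\<in>V. \<Sum>y\<in>V. real (gdist V E x y)) = real (card V) ^ 2 * Max (Deg V E ` V)"
    using K_pos card_V_pos by (simp add: field_simps)
  moreover have "(\<Sum>u\<in>V. \<Sum>p\<in>V. gdist_to u p) = (\<Sum>x\<in>V. \<Sum>y\<in>V. real (gdist V E x y))"
    unfolding gdist_to_def by (rule sum.swap)
  ultimately show ?thesis
    by (simp add: sum_distrib_left[symmetric] power2_eq_square)
qed

lemma Deg_eq_Max: "u \<in> V \<Longrightarrow> Deg V E u = Max (Deg V E ` V)"
proof -
  assume "u \<in> V"
  have le: "real (card V) * Deg V E v \<le> real (card V) * Max (Deg V E ` V)" if "v \<in> V" for v
    using that finite_V by (intro mult_left_mono) auto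
  have "(\<Sum>v\<in>V. real (card V) * Max (Deg V E ` V)) = (\<Sum>v\<in>V. K * (\<Sum>p\<in>V. gdist_to v p))"
    by (rule sum_K_mult_sum_gdist_to[symmetric])
  also have "\<dots> \<le> (\<Sum>v\<in>V. real (card V) * Deg V E v)"
    using min_curv_mult_sum_gdist_to_le K_eq_min_curv by (intro sum_mono) simp
  moreover have "(\<Sum>v\<in>V. real (card V) * Deg V E v) \<le> (\<Sum>v\<in>V. real (card V) * Max (Deg V E ` V))"
    using le by (rule sum_mono)
  ultimately have "(\<Sum>v\<in>V. real (card V) * Deg V E v) = (\<Sum>v\<in>V. real (card V) * Max (Deg V E ` V))"
    by linarith
  then have "real (card V) * Deg V E u = real (card V) * Max (Deg V E ` V)"
    using le \<open>u \<in> V\<close> finite_V by (rule sum_mono_inv)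
  then show ?thesis using card_V_pos by simp
qed

lemma K_mult_sum_gdist_to:
  "u \<in> V \<Longrightarrow> K * (\<Sum>p\<in>V. gdist_to u p) = real (card V) * Deg V E u"
proof -
  assume "u \<in> V"
  have eq: "(\<Sum>v\<in>V. K * (\<Sum>p\<in>V. gdist_to v p)) = (\<Sum>v\<in>V. real (card V) * Deg V E v)"
    unfolding sum_K_mult_sum_gdist_to by (intro sum.cong) (simp_all add: Deg_eq_Max)
  have le: "K * (\<Sum>p\<in>V. gdist_to v p) \<le> real (card V) * Deg V E v" if "v \<in> V" for v
    using min_curv_mult_sum_gdist_to_le[OF that] K_eq_min_curv by simp
  from eq le \<open>u \<in> V\<close> finite_V show ?thesis by (rule sum_mono_inv)
qed

lemma laplacian_gdist_to:
  "u \<in> V \<Longrightarrow> p \<in> V \<Longrightarrow> laplacian V E (gdist_to u) p = Deg V E u - K * gdist_to u p"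
proof -
  assume "u \<in> V" "p \<in> V"
  have eq: "(\<Sum>q\<in>V. K * gdist_to u q) = (\<Sum>q\<in>V. Deg V E u - laplacian V E (gdist_to u) q)"
    using K_mult_sum_gdist_to[OF \<open>u \<in> V\<close>]
    by (simp add: sum_distrib_left[symmetric] sum_const_minus_laplacian)
  have le: "K * gdist_to u q \<le> Deg V E u - laplacian V E (gdist_to u) q" if "q \<in> V" for q
    using min_curv_mult_gdist_to_le[OF \<open>u \<in> V\<close> that] K_eq_min_curv by simp
  from eq le \<open>p \<in> V\<close> finite_V have "K * gdist_to u p = Deg V E u - laplacian V E (gdist_to u) p"
    by (rule sum_mono_inv)
  then show ?thesis by simp
qed

lemma card_far_neighbours_step:
  assumes "E x y" "E q p" "q \<in> closer_to x y" "p \<in> closer_to x y"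
    and "gdist V E p x = Suc (gdist V E q x)"
  shows "card (neighbours p \<inter> closer_to y x) = card (neighbours q \<inter> closer_to y x)"
proof -
  let ?a = "\<lambda>v. real (card (neighbours v \<inter> closer_to y x))"
  have V: "x \<in> V" "y \<in> V" "p \<in> V" "q \<in> V"
    using edge_in_V assms(1,2) by auto
  have lip: "one_lipschitz E (gdist_to x)" "one_lipschitz E (gdist_to y)"
    using one_lipschitz_gdist_to V by auto
  have step_x: "gdist_to x p = gdist_to x q + 1" and step_y: "gdist_to y p = gdist_to y q + 1"
    using assms(5) closer_to_gdist_Suc[OF assms(1)] assms(3,4) by (simp_all add: gdist_to_def)
  have "min (gdist_to x p) (gdist_to y p) - min (gdist_to x q) (gdist_to y q) = 1"
    using step_x assms(3,4) by (simp add: closer_to_def gdist_to_def)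
  from min_curv_le_laplacian_diff[OF assms(2) one_lipschitz_min[OF lip] this]
  have "K \<le> (laplacian V E (gdist_to x) q - ?a q) - (laplacian V E (gdist_to x) p - ?a p)"
    using K_eq_min_curv laplacian_min_gdist_to[OF assms(1)] assms(3,4) by simp
  \<comment> \<open>in the sharp case \<open>laplacian V E (gdist_to x)\<close> drops by exactly \<open>K\<close> from \<open>q\<close> to \<open>p\<close>\<close>
  then have "?a q \<le> ?a p"
    using laplacian_gdist_to V step_x by (simp add: algebra_simps)
  have "max (gdist_to x p) (gdist_to y p) - max (gdist_to x q) (gdist_to y q) = 1"
    using step_y assms(3,4) by (simp add: closer_to_def gdist_to_def)
  from min_curv_le_laplacian_diff[OF assms(2) one_lipschitz_max[OF lip] this]
  have "K \<le> (laplacian V E (gdist_to y) q + ?a q) - (laplacian V E (gdist_to y) p + ?a p)"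
    using K_eq_min_curv laplacian_max_gdist_to[OF assms(1)] assms(3,4) by simp
  then have "?a p \<le> ?a q"
    using laplacian_gdist_to V step_y by (simp add: algebra_simps)
  with \<open>?a q \<le> ?a p\<close> show ?thesis by simp
qed

lemma card_far_neighbours_eq_1:
  "E x y \<Longrightarrow> p \<in> closer_to x y \<Longrightarrow> card (neighbours p \<inter> closer_to y x) = 1"
proof (induction "gdist V E p x" arbitrary: p)
  case 0
  then have "p = x" using gdist_eq_0_iff edge_in_V unfolding closer_to_def by auto
  then show ?case using neighbours_inter_closer_to_self[OF 0(2)] by simp
next
  case (Suc k)
  have V: "p \<in> V" "x \<in> V" "y \<in> V"
    using Suc.prems edge_in_V unfolding closer_to_def by auto
  obtain q where q: "E p q" "gdist V E q x = k"
    using gdist_Suc_neighbour V Suc.hyps(2) by metis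
  have "gdist V E p y \<le> gdist V E q y + 1"
    using gdist_le_edge[OF q(1) V(3)] .
  then have "q \<in> closer_to x y"
    using closer_to_gdist_Suc[OF Suc.prems] Suc.hyps(2) q edge_in_V
    unfolding closer_to_def by auto
  moreover from this have "card (neighbours q \<inter> closer_to y x) = 1"
    using Suc.hyps(1) q(2) Suc.prems(1) by simp
  ultimately show ?case
    using Suc.hyps(2) q card_far_neighbours_step[OF Suc.prems(1) edge_sym[OF q(1)] _ Suc.prems(2)]
    by simp
qed

lemma card_equidistant_neighbours:
  assumes "E x y" "p \<in> closer_to x y"
  shows "real (card (neighbours p \<inter> equidistant x y)) = K - 2"
proof -
  have V: "x \<in> V" "y \<in> V" "p \<in> V"
    using assms edge_in_V unfolding closer_to_def by auto
  have "- (2 * real (card (neighbours p \<inter> closer_to y x))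
        + real (card (neighbours p \<inter> equidistant x y)))
      = laplacian V E (gdist_to y) p - laplacian V E (gdist_to x) p"
    using laplacian_gdist_to_diff[OF assms] laplacian_diff[of V E "gdist_to y" "gdist_to x" p]
    by simp
  also have "\<dots> = - K"
  proof -
    have "Deg V E x = Deg V E y" using Deg_eq_Max V by simp
    moreover have "gdist_to y p = gdist_to x p + 1"
      using closer_to_gdist_Suc[OF assms] by (simp add: gdist_to_def)
    ultimately show ?thesis
      using laplacian_gdist_to[OF V(1,3)] laplacian_gdist_to[OF V(2,3)] by (simp add: algebra_simps)
  qed
  finally show ?thesis
    using card_far_neighbours_eq_1[OF assms] by simp
qed

end

theorem lemma3p4:
  fixes V :: "'a set" and E :: "'a \<Rightarrow> 'a \<Rightarrow> bool" and K :: real and x y :: 'a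
  assumes "simple_graph V E"
    and "connected_graph V E"
    and "K = min_curv V E"
    and "K > 0"
    and "diam_eff V E = real (Max (Deg V E ` V)) / K"
    and "E x y"
  shows "\<forall>x' \<in> {v \<in> V. gdist V E v x < gdist V E v y}.
           card {w \<in> V. E x' w \<and> gdist V E w y < gdist V E w x} = 1 \<and>
           real (card {w \<in> V. E x' w \<and> gdist V E w x = gdist V E w y}) = K - 2"
proof -
  interpret bonnet_myers_sharp V E K
    using assms(1-5) by unfold_locales
  show ?thesis
  proof
    fix x' assume "x' \<in> {v \<in> V. gdist V E v x < gdist V E v y}"
    then have x': "x' \<in> closer_to x y" unfolding closer_to_def .
    have "{w \<in> V. E x' w \<and> gdist V E w y < gdist V E w x} = neighbours x' \<inter> closer_to y x"
      and "{w \<in> V. E x' w \<and> gdist V E w x = gdist V E w y} = neighbours x' \<inter> equidistant x y"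
      unfolding neighbours_def closer_to_def equidistant_def by auto
    then show "card {w \<in> V. E x' w \<and> gdist V E w y < gdist V E w x} = 1 \<and>
        real (card {w \<in> V. E x' w \<and> gdist V E w x = gdist V E w y}) = K - 2"
      using card_far_neighbours_eq_1[OF assms(6) x'] card_equidistant_neighbours[OF assms(6) x']
      by simp
  qed
qed

end
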